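(* Let $f=(v_1,v_2,v_3)$ be a non-degenerate counterclockwise triangle with vertices $z_1,z_2,z_3\in\mathbb C$, circumradius $R(f)$ and (positive) area $\mathrm{Area}(f)=\frac1{4\mathrm i}\big((z_3-z_1)(\bar z_2-\bar z_1)-(z_2-z_1)(\bar z_3-\bar z_1)\big)$. Let $D(f)_{i\bar j}=-\frac{\partial^2}{\partial z_i\partial\bar z_j}\mathrm{Vol}(f)$, $i,j\in\{1,2,3\}$. Then for all $\Phi,\Psi:\{v_1,v_2,v_3\}\to\mathbb C$, $$\sum_{i,j=1}^3\Phi(v_i)D(f)_{i\bar j}\overline{\Psi(v_j)}=\frac{\mathrm{Area}(f)}{R(f)^2}\,\overline\nabla\Phi(f)\,\nabla\overline\Psi(f),$$ where $\overline\Psi$ denotes the function $v\mapsto\overline{\Psi(v)}$.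
   Context: $\mathrm{Vol}(f)=\mathrm{Im}\,\mathrm{Li}_2(u)+\ln|u|\,\mathrm{Arg}(1-u)$, $u=\frac{z_3-z_1}{z_2-z_1}$ (Bloch–Wigner function; hyperbolic volume of the ideal tetrahedron $(z_1,z_2,z_3,\infty)$). Discrete derivatives of a function $\Phi$ on the vertices: $\nabla\Phi(f)=\frac1{4\mathrm i}\frac{\Phi(v_1)(\bar z_3-\bar z_2)+\Phi(v_2)(\bar z_1-\bar z_3)+\Phi(v_3)(\bar z_2-\bar z_1)}{\mathrm{Area}(f)}$ and $\overline\nabla\Phi(f)=-\frac1{4\mathrm i}\frac{\Phi(v_1)(z_3-z_2)+\Phi(v_2)(z_1-z_3)+\Phi(v_3)(z_2-z_1)}{\mathrm{Area}(f)}$. Derivatives in $z_i,\bar z_j$ are Wirtinger derivatives. *)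

theory Defs
  imports "HOL-Analysis.Analysis"
begin

text \<open>Dilogarithm (principal branch): Li2 u = - integral over [0,1] of Ln(1 - t u)/t dt,
  i.e. the integral of -Ln(1-s)/s along the segment from 0 to u.\<close>
definition Li2 :: "complex \<Rightarrow> complex" where
  "Li2 u = - integral {0..1::real} (\<lambda>t. Ln (1 - of_real t * u) / of_real t)"

text \<open>Bloch--Wigner function / hyperbolic volume of the ideal tetrahedron (z1,z2,z3,\<infinity>).\<close>
definition Vol :: "complex \<Rightarrow> complex \<Rightarrow> complex \<Rightarrow> real" where
  "Vol z1 z2 z3 = (let u = (z3 - z1) / (z2 - z1) in
     Im (Li2 u) + ln (cmod u) * Arg (1 - u))"

definition VolF :: "(nat \<Rightarrow> complex) \<Rightarrow> complex" where
  "VolF w = complex_of_real (Vol (w 1) (w 2) (w 3))"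

definition dirD :: "((nat \<Rightarrow> complex) \<Rightarrow> complex) \<Rightarrow> (nat \<Rightarrow> complex) \<Rightarrow> (nat \<Rightarrow> complex) \<Rightarrow> complex" where
  "dirD F d z = vector_derivative (\<lambda>t::real. F (\<lambda>k. z k + of_real t * d k)) (at 0)"

definition unitdir :: "nat \<Rightarrow> complex \<Rightarrow> nat \<Rightarrow> complex" where
  "unitdir i c = (\<lambda>k. if k = i then c else 0)"

definition Wz :: "nat \<Rightarrow> ((nat \<Rightarrow> complex) \<Rightarrow> complex) \<Rightarrow> (nat \<Rightarrow> complex) \<Rightarrow> complex" where
  "Wz i F z = (dirD F (unitdir i 1) z - \<i> * dirD F (unitdir i \<i>) z) / 2"

definition Wzbar :: "nat \<Rightarrow> ((nat \<Rightarrow> complex) \<Rightarrow> complex) \<Rightarrow> (nat \<Rightarrow> complex) \<Rightarrow> complex" where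
  "Wzbar i F z = (dirD F (unitdir i 1) z + \<i> * dirD F (unitdir i \<i>) z) / 2"

definition Dmat :: "(nat \<Rightarrow> complex) \<Rightarrow> nat \<Rightarrow> nat \<Rightarrow> complex" where
  "Dmat z i j = - Wz i (Wzbar j VolF) z"

definition Area :: "(nat \<Rightarrow> complex) \<Rightarrow> real" where
  "Area z = Re (((z 3 - z 1) * cnj (z 2 - z 1) - (z 2 - z 1) * cnj (z 3 - z 1)) / (4 * \<i>))"

definition circumradius :: "(nat \<Rightarrow> complex) \<Rightarrow> real" where
  "circumradius z = (THE r. \<exists>c. cmod (z 1 - c) = r \<and> cmod (z 2 - c) = r \<and> cmod (z 3 - c) = r)"

definition nabla :: "(nat \<Rightarrow> complex) \<Rightarrow> (nat \<Rightarrow> complex) \<Rightarrow> complex" where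
  "nabla z \<Phi> = (1 / (4 * \<i>)) * (\<Phi> 1 * (cnj (z 3) - cnj (z 2)) + \<Phi> 2 * (cnj (z 1) - cnj (z 3))
      + \<Phi> 3 * (cnj (z 2) - cnj (z 1))) / complex_of_real (Area z)"

definition nablabar :: "(nat \<Rightarrow> complex) \<Rightarrow> (nat \<Rightarrow> complex) \<Rightarrow> complex" where
  "nablabar z \<Phi> = - (1 / (4 * \<i>)) * (\<Phi> 1 * (z 3 - z 2) + \<Phi> 2 * (z 1 - z 3)
      + \<Phi> 3 * (z 2 - z 1)) / complex_of_real (Area z)"

end

theory Submission
  imports Defs "HOL-Complex_Analysis.Complex_Analysis"
begin

text \<open>
  With u = (z3 - z1) / (z2 - z1) the volume is D(u) for the Bloch--Wigner function D, and u is a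
  holomorphic function of the vertices with du/dz_i = (z_(i+2) - z_(i+1)) / (z2 - z1)^2 (indices
  mod 3). Hence the matrix of mixed second Wirtinger derivatives of Vol has rank one:
  d_i dbar_j Vol = (d dbar D)(u) * (du/dz_i) * cnj (du/dz_j).
  Writing D through Li2, Ln u, Ln (1 - u) and their conjugates, with Li2' u = - Ln (1 - u) / u
  (the integral defining Li2 is a primitive of its integrand on a star-shaped domain),
  gives dbar D = (ln|1 - u| / cnj u + ln|u| / (1 - cnj u)) / (2 i) and
  d dbar D = - Im u / (2 |u|^2 |1 - u|^2). For a counterclockwise triangle
  Im u = 2 Area / |z2 - z1|^2 and R = |z2 - z1| |z3 - z1| |z3 - z2| / (4 Area), so this coefficient is
  - |z2 - z1|^4 / (16 Area R^2), while the two sums over the vertices are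
  - 4 i Area nablabar(Phi) / (z2 - z1)^2 and its complex conjugate counterpart for Psi.
\<close>

section \<open>The derivative of the dilogarithm\<close>

definition dilog_integrand :: "complex \<Rightarrow> complex" where
  "dilog_integrand s = (if s = 0 then 1 else - Ln (1 - s) / s)"

text \<open>A domain star-shaped about 0 that avoids the branch cut [1, \<infinity>) of Ln (1 - s) and
  contains the upper half-plane.\<close>

definition dilog_domain :: "complex set" where
  "dilog_domain = {s. 0 < Im s} \<union> ball 0 1"

lemma open_dilog_domain: "open dilog_domain"
  unfolding dilog_domain_def by (intro open_Un open_halfspace_Im_gt open_ball)

lemma segment_subset_dilog_domain:
  assumes "x \<in> dilog_domain"
  shows "closed_segment 0 x \<subseteq> dilog_domain"
proof
  fix y assume "y \<in> closed_segment 0 x"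
  then obtain u where u: "0 \<le> u" "u \<le> 1" "y = u *\<^sub>R x" by (auto simp: in_segment)
  consider "u = 0" | "0 < u \<and> 0 < Im x" | "cmod x < 1"
    using assms u by (cases "u = 0") (auto simp: dilog_domain_def)
  then show "y \<in> dilog_domain"
  proof cases
    case 3
    moreover have "norm y \<le> norm x" using u by (simp add: mult_left_le_one_le)
    ultimately show ?thesis by (simp add: dilog_domain_def)
  qed (use u in \<open>simp_all add: dilog_domain_def\<close>)
qed

lemma starlike_dilog_domain: "starlike dilog_domain"
  unfolding starlike_def
proof (intro bexI ballI)
  show "0 \<in> dilog_domain" by (simp add: dilog_domain_def)
qed (rule segment_subset_dilog_domain)

lemma one_minus_dilog_domain_notin_nonpos_Reals:
  "s \<in> dilog_domain \<Longrightarrow> 1 - s \<notin> \<real>\<^sub>\<le>\<^sub>0"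
  using abs_Re_le_cmod[of s]
  by (auto simp: dilog_domain_def complex_nonpos_Reals_iff)

lemma has_field_derivative_Ln_one_minus:
  "s \<in> dilog_domain \<Longrightarrow> ((\<lambda>s. Ln (1 - s)) has_field_derivative - inverse (1 - s)) (at s)"
  using one_minus_dilog_domain_notin_nonpos_Reals[of s]
  by (auto intro!: derivative_eq_intros)

lemma dilog_integrand_field_differentiable:
  assumes "s \<in> dilog_domain" "s \<noteq> 0"
  shows "dilog_integrand field_differentiable at s"
proof -
  have "((\<lambda>s. - Ln (1 - s) / s) has_field_derivative
          (- (- inverse (1 - s)) * s - (- Ln (1 - s)) * 1) / (s * s)) (at s)"
    using assms has_field_derivative_Ln_one_minus[OF assms(1)]
    by (intro derivative_intros) auto
  then have "(dilog_integrand has_field_derivative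
          (- (- inverse (1 - s)) * s - (- Ln (1 - s)) * 1) / (s * s)) (at s)"
    by (rule has_field_derivative_transform_within_open[where S = "-{0}"])
       (use assms in \<open>auto simp: dilog_integrand_def\<close>)
  then show ?thesis
    by (auto simp: field_differentiable_def)
qed

lemma isCont_dilog_integrand_0: "isCont dilog_integrand 0"
proof -
  have "((\<lambda>s. (Ln (1 - s) - Ln (1 - 0)) / (s - 0)) \<longlongrightarrow> - 1) (at 0)"
    using has_field_derivative_Ln_one_minus[of 0]
    by (simp add: has_field_derivative_iff dilog_domain_def)
  then have "((\<lambda>s. - (Ln (1 - s) / s)) \<longlongrightarrow> - (- 1)) (at 0)"
    by (intro tendsto_minus) simp
  moreover have "\<forall>\<^sub>F s in at 0. - (Ln (1 - s) / s) = dilog_integrand s"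
    by (auto simp: dilog_integrand_def eventually_at_filter)
  ultimately have "(dilog_integrand \<longlongrightarrow> 1) (at 0)"
    using Lim_transform_eventually by fastforce
  then show ?thesis
    by (simp add: isCont_def dilog_integrand_def)
qed

lemma continuous_on_dilog_integrand: "continuous_on dilog_domain dilog_integrand"
proof (intro continuous_at_imp_continuous_on ballI)
  fix s assume "s \<in> dilog_domain"
  then show "isCont dilog_integrand s"
    using isCont_dilog_integrand_0 dilog_integrand_field_differentiable[of s]
    by (cases "s = 0") (auto intro: field_differentiable_imp_continuous_at)
qed

lemma has_field_derivative_dilog_primitive:
  assumes "x \<in> dilog_domain"
  shows "((\<lambda>x. contour_integral (linepath 0 x) dilog_integrand)
           has_field_derivative dilog_integrand x) (at x)"
proof (rule triangle_contour_integrals_starlike_primitive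
         [OF continuous_on_dilog_integrand _ open_dilog_domain assms segment_subset_dilog_domain])
  show "0 \<in> dilog_domain"
    by (simp add: dilog_domain_def)
  fix b c assume bc: "closed_segment b c \<subseteq> dilog_domain"
  have "path_image (linepath 0 b +++ linepath b c +++ linepath c 0) \<subseteq> dilog_domain"
    using bc segment_subset_dilog_domain[of b] segment_subset_dilog_domain[of c]
    by (auto simp: path_image_join closed_segment_commute)
  then have "(dilog_integrand has_contour_integral 0) (linepath 0 b +++ linepath b c +++ linepath c 0)"
    by (intro Cauchy_theorem_starlike[OF open_dilog_domain starlike_dilog_domain finite.emptyI[THEN finite.insertI, of 0]]
          continuous_on_dilog_integrand dilog_integrand_field_differentiable) auto
  then show "contour_integral (linepath 0 b) dilog_integrand + contour_integral (linepath b c) dilog_integrand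
      + contour_integral (linepath c 0) dilog_integrand = 0"
    by (rule has_chain_integral_chain_integral3)
qed

lemma Li2_eq_contour_integral:
  assumes "x \<in> dilog_domain" "x \<noteq> 0"
  shows "Li2 x = contour_integral (linepath 0 x) dilog_integrand"
proof -
  have "dilog_integrand contour_integrable_on linepath 0 x"
    by (intro contour_integrable_continuous_linepath continuous_on_subset[OF continuous_on_dilog_integrand]
          segment_subset_dilog_domain assms)
  then have "((\<lambda>t. dilog_integrand (of_real t * x) * x)
               has_integral contour_integral (linepath 0 x) dilog_integrand) {0..1}"
    by (auto dest!: has_contour_integral_integral simp: has_contour_integral_linepath)
       (simp add: linepath_def scaleR_conv_of_real)
  then have "((\<lambda>t. - (Ln (1 - of_real t * x) / of_real t))
               has_integral contour_integral (linepath 0 x) dilog_integrand) {0..1}"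
  proof (rule has_integral_spike[OF negligible_sing[of 0], rotated])
    fix t :: real assume "t \<in> {0..1} - {0}"
    then have "t \<noteq> 0" by simp
    then have "- (Ln (1 - of_real t * x) / of_real t) = - Ln (1 - of_real t * x) / (of_real t * x) * x"
      using assms by (simp add: divide_simps)
    also have "\<dots> = dilog_integrand (of_real t * x) * x"
      using \<open>t \<noteq> 0\<close> assms by (simp add: dilog_integrand_def)
    finally show "- (Ln (1 - of_real t * x) / of_real t) = dilog_integrand (of_real t * x) * x" .
  qed
  from has_integral_neg[OF this]
  have "((\<lambda>t. Ln (1 - of_real t * x) / of_real t)
          has_integral - contour_integral (linepath 0 x) dilog_integrand) {0..1}"
    by (simp only: minus_minus)
  then show ?thesis
    unfolding Li2_def by (simp only: integral_unique minus_minus)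
qed

lemma has_field_derivative_Li2:
  assumes "0 < Im x"
  shows "(Li2 has_field_derivative - Ln (1 - x) / x) (at x)"
proof -
  have x: "x \<in> dilog_domain" "x \<noteq> 0"
    using assms by (auto simp: dilog_domain_def)
  have "(Li2 has_field_derivative dilog_integrand x) (at x)"
  proof (rule has_field_derivative_transform_within_open
           [OF has_field_derivative_dilog_primitive[OF x(1)] open_halfspace_Im_gt])
    show "x \<in> {s. 0 < Im s}" using assms by simp
    fix y :: complex assume "y \<in> {s. 0 < Im s}"
    then have "y \<in> dilog_domain" "y \<noteq> 0"
      by (auto simp: dilog_domain_def)
    then show "contour_integral (linepath 0 y) dilog_integrand = Li2 y"
      by (simp add: Li2_eq_contour_integral)
  qed
  then show ?thesis
    using x by (simp add: dilog_integrand_def)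
qed

section \<open>Wirtinger derivatives\<close>

definition has_wirtinger_derivs :: "(complex \<Rightarrow> complex) \<Rightarrow> complex \<Rightarrow> complex \<Rightarrow> complex \<Rightarrow> bool" where
  "has_wirtinger_derivs f p q u \<longleftrightarrow> (f has_derivative (\<lambda>h. p * h + q * cnj h)) (at u)"

lemma has_wirtinger_derivs_cong:
  "has_wirtinger_derivs f p q u \<Longrightarrow> p = p' \<Longrightarrow> q = q' \<Longrightarrow> has_wirtinger_derivs f p' q' u"
  by simp

lemma has_wirtinger_derivs_holomorphic:
  "(f has_field_derivative f') (at u) \<Longrightarrow> has_wirtinger_derivs f f' 0 u"
  unfolding has_wirtinger_derivs_def has_field_derivative_def
  by (erule has_derivative_eq_rhs) auto

lemma has_wirtinger_derivs_const: "has_wirtinger_derivs (\<lambda>x. c) 0 0 u"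
  unfolding has_wirtinger_derivs_def by (rule has_derivative_eq_rhs[OF has_derivative_const]) auto

lemma has_wirtinger_derivs_cnj:
  "has_wirtinger_derivs f p q u \<Longrightarrow> has_wirtinger_derivs (\<lambda>x. cnj (f x)) (cnj q) (cnj p) u"
  unfolding has_wirtinger_derivs_def
  by (drule bounded_linear.has_derivative[OF bounded_linear_cnj]) (erule has_derivative_eq_rhs, auto)

lemma has_wirtinger_derivs_add:
  "has_wirtinger_derivs f p1 q1 u \<Longrightarrow> has_wirtinger_derivs g p2 q2 u \<Longrightarrow>
   has_wirtinger_derivs (\<lambda>x. f x + g x) (p1 + p2) (q1 + q2) u"
  unfolding has_wirtinger_derivs_def
  by (drule (1) has_derivative_add) (erule has_derivative_eq_rhs, auto simp: algebra_simps)

lemma has_wirtinger_derivs_diff: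
  "has_wirtinger_derivs f p1 q1 u \<Longrightarrow> has_wirtinger_derivs g p2 q2 u \<Longrightarrow>
   has_wirtinger_derivs (\<lambda>x. f x - g x) (p1 - p2) (q1 - q2) u"
  unfolding has_wirtinger_derivs_def
  by (drule (1) has_derivative_diff) (erule has_derivative_eq_rhs, auto simp: algebra_simps)

lemma has_wirtinger_derivs_mult:
  "has_wirtinger_derivs f p1 q1 u \<Longrightarrow> has_wirtinger_derivs g p2 q2 u \<Longrightarrow>
   has_wirtinger_derivs (\<lambda>x. f x * g x) (f u * p2 + p1 * g u) (f u * q2 + q1 * g u) u"
  unfolding has_wirtinger_derivs_def
  by (drule (1) has_derivative_mult) (erule has_derivative_eq_rhs, auto simp: algebra_simps)

lemma has_wirtinger_derivs_divide:
  "has_wirtinger_derivs f p1 q1 u \<Longrightarrow> has_wirtinger_derivs g p2 q2 u \<Longrightarrow> g u \<noteq> 0 \<Longrightarrow>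
   has_wirtinger_derivs (\<lambda>x. f x / g x)
     ((p1 * g u - f u * p2) / (g u * g u)) ((q1 * g u - f u * q2) / (g u * g u)) u"
  unfolding has_wirtinger_derivs_def
  by (drule (2) has_derivative_divide')
     (erule has_derivative_eq_rhs, auto simp: algebra_simps add_divide_distrib diff_divide_distrib)

lemma has_wirtinger_derivs_transform_open:
  "has_wirtinger_derivs f p q u \<Longrightarrow> open S \<Longrightarrow> u \<in> S \<Longrightarrow> (\<And>x. x \<in> S \<Longrightarrow> f x = g x) \<Longrightarrow>
   has_wirtinger_derivs g p q u"
  unfolding has_wirtinger_derivs_def by (rule has_derivative_transform_within_open)

lemma has_wirtinger_derivs_Re:
  assumes "(g has_field_derivative g') (at u)"
  shows "has_wirtinger_derivs (\<lambda>x. of_real (Re (g x))) (g' / 2) (cnj g' / 2) u"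
proof -
  have "(\<lambda>x. of_real (Re (g x))) = (\<lambda>x. (g x + cnj (g x)) * (1 / 2))"
    by (simp add: complex_add_cnj)
  moreover have "has_wirtinger_derivs (\<lambda>x. (g x + cnj (g x)) * (1 / 2)) (g' / 2) (cnj g' / 2) u"
    using has_wirtinger_derivs_mult[OF has_wirtinger_derivs_add
            [OF has_wirtinger_derivs_holomorphic[OF assms] has_wirtinger_derivs_cnj
              [OF has_wirtinger_derivs_holomorphic[OF assms]]] has_wirtinger_derivs_const]
    by (rule has_wirtinger_derivs_cong) auto
  ultimately show ?thesis by simp
qed

lemma has_wirtinger_derivs_Im:
  assumes "(g has_field_derivative g') (at u)"
  shows "has_wirtinger_derivs (\<lambda>x. of_real (Im (g x))) (g' / (2 * \<i>)) (- cnj g' / (2 * \<i>)) u"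
proof -
  have "(\<lambda>x. of_real (Im (g x))) = (\<lambda>x. (g x + -1 * cnj (g x)) * (1 / (2 * \<i>)))"
    using complex_diff_cnj by (auto simp: field_simps)
  moreover have "has_wirtinger_derivs (\<lambda>x. (g x + -1 * cnj (g x)) * (1 / (2 * \<i>)))
      (g' / (2 * \<i>)) (- cnj g' / (2 * \<i>)) u"
    using has_wirtinger_derivs_mult[OF has_wirtinger_derivs_add
            [OF has_wirtinger_derivs_holomorphic[OF assms] has_wirtinger_derivs_mult
              [OF has_wirtinger_derivs_const[of "-1"] has_wirtinger_derivs_cnj
                [OF has_wirtinger_derivs_holomorphic[OF assms]]]] has_wirtinger_derivs_const]
    by (rule has_wirtinger_derivs_cong) auto
  ultimately show ?thesis by simp
qed

section \<open>The Bloch--Wigner function\<close>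

definition bloch_wigner :: "complex \<Rightarrow> complex" where
  "bloch_wigner u = complex_of_real (Im (Li2 u) + ln (cmod u) * Arg (1 - u))"

definition bloch_wigner_dbar :: "complex \<Rightarrow> complex" where
  "bloch_wigner_dbar u =
     (of_real (ln (cmod (1 - u))) / cnj u + of_real (ln (cmod u)) / (1 - cnj u)) / (2 * \<i>)"

lemma Im_pos_avoids_singularities:
  assumes "0 < Im u"
  shows "u \<noteq> 0" "1 - u \<noteq> 0" "cnj u \<noteq> 0" "1 - cnj u \<noteq> 0"
    "u \<notin> \<real>\<^sub>\<le>\<^sub>0" "1 - u \<notin> \<real>\<^sub>\<le>\<^sub>0" "u \<in> dilog_domain"
  using assms by (auto simp: complex_eq_iff complex_nonpos_Reals_iff dilog_domain_def)

lemma has_wirtinger_derivs_bloch_wigner: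
  assumes "0 < Im u"
  shows "\<exists>p. has_wirtinger_derivs bloch_wigner p (bloch_wigner_dbar u) u"
proof -
  note nz = Im_pos_avoids_singularities[OF assms]
  have uhp: "u \<in> {s. 0 < Im s}"
    using assms by simp
  txt \<open>On the upper half-plane ln |x| = Re (Ln x) and Arg (1 - x) = Im (Ln (1 - x)).\<close>
  have bw: "of_real (Im (Li2 x)) + of_real (Re (Ln x)) * of_real (Im (Ln (1 - x))) = bloch_wigner x"
    if "x \<in> {s. 0 < Im s}" for x
    using Im_pos_avoids_singularities[of x] that by (simp add: bloch_wigner_def Arg_eq_Im_Ln)
  note derivs = has_wirtinger_derivs_transform_open[OF has_wirtinger_derivs_add
        [OF has_wirtinger_derivs_Im[OF has_field_derivative_Li2[OF assms]]
            has_wirtinger_derivs_mult[OF has_wirtinger_derivs_Re[OF has_field_derivative_Ln[OF nz(5)]]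
              has_wirtinger_derivs_Im[OF has_field_derivative_Ln_one_minus[OF nz(7)]]]]
        open_halfspace_Im_gt uhp bw]
  have cnj_Ln: "cnj (Ln (1 - u)) = of_real (Re (Ln (1 - u))) - \<i> * of_real (Im (Ln (1 - u)))"
    by (simp add: complex_eq_iff)
  have "- cnj (- Ln (1 - u) / u) / (2 * \<i>) + (of_real (Re (Ln u)) * (- cnj (- inverse (1 - u)) / (2 * \<i>))
         + cnj (inverse u) / 2 * of_real (Im (Ln (1 - u)))) = bloch_wigner_dbar u"
    using nz by (simp add: bloch_wigner_dbar_def cnj_Ln field_simps)
  then show ?thesis
    using has_wirtinger_derivs_cong[OF derivs refl] by blast
qed

lemma of_real_Im_div_norms:
  "complex_of_real (Im u / (2 * (cmod u)\<^sup>2 * (cmod (1 - u))\<^sup>2))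
     = (u - cnj u) / (4 * \<i> * (u * cnj u) * ((1 - u) * (1 - cnj u)))"
proof -
  have "complex_of_real (Im u / (2 * (cmod u)\<^sup>2 * (cmod (1 - u))\<^sup>2))
      = complex_of_real (Im u) / (2 * complex_of_real ((cmod u)\<^sup>2) * complex_of_real ((cmod (1 - u))\<^sup>2))"
    by (simp only: of_real_divide of_real_mult of_real_numeral)
  also have "\<dots> = (u - cnj u) / (2 * \<i>) / (2 * (u * cnj u) * ((1 - u) * (1 - cnj u)))"
  proof -
    have "complex_of_real (Im u) = (u - cnj u) / (2 * \<i>)"
      by (simp add: complex_eq_iff)
    then show ?thesis
      unfolding complex_norm_square complex_cnj_diff complex_cnj_one by simp
  qed
  also have "\<dots> = (u - cnj u) / (4 * \<i> * (u * cnj u) * ((1 - u) * (1 - cnj u)))"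
    by (simp add: divide_divide_eq_left mult_ac)
  finally show ?thesis .
qed

lemma has_wirtinger_derivs_bloch_wigner_dbar:
  assumes "0 < Im u"
  shows "\<exists>q. has_wirtinger_derivs bloch_wigner_dbar
               (- of_real (Im u / (2 * (cmod u)\<^sup>2 * (cmod (1 - u))\<^sup>2))) q u"
proof -
  note nz = Im_pos_avoids_singularities[OF assms]
  have uhp: "u \<in> {s. 0 < Im s}"
    using assms by simp
  have dbar: "(of_real (Re (Ln (1 - x))) / cnj x + of_real (Re (Ln x)) / (1 - cnj x)) / (2 * \<i>)
      = bloch_wigner_dbar x" if "x \<in> {s. 0 < Im s}" for x
    using Im_pos_avoids_singularities[of x] that by (simp add: bloch_wigner_dbar_def)
  have two_i_nonzero: "2 * \<i> \<noteq> (0::complex)"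
    by simp
  note cnj_id = has_wirtinger_derivs_cnj[OF has_wirtinger_derivs_holomorphic[OF DERIV_ident]]
  note derivs = has_wirtinger_derivs_transform_open[OF has_wirtinger_derivs_divide[OF
         has_wirtinger_derivs_add
           [OF has_wirtinger_derivs_divide[OF has_wirtinger_derivs_Re[OF has_field_derivative_Ln_one_minus[OF nz(7)]] cnj_id nz(3)]
               has_wirtinger_derivs_divide[OF has_wirtinger_derivs_Re[OF has_field_derivative_Ln[OF nz(5)]]
                 has_wirtinger_derivs_diff[OF has_wirtinger_derivs_const cnj_id] nz(4)]]
         has_wirtinger_derivs_const[of "2 * \<i>"] two_i_nonzero] open_halfspace_Im_gt uhp dbar]
  have "((((- inverse (1 - u) / 2 * cnj u - of_real (Re (Ln (1 - u))) * cnj 0) / (cnj u * cnj u)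
        + (inverse u / 2 * (1 - cnj u) - of_real (Re (Ln u)) * (0 - cnj 0)) / ((1 - cnj u) * (1 - cnj u)))
        * (2 * \<i>) - (of_real (Re (Ln (1 - u))) / cnj u + of_real (Re (Ln u)) / (1 - cnj u)) * 0)
        / (2 * \<i> * (2 * \<i>)))
      = - ((u - cnj u) / (4 * \<i> * (u * cnj u) * ((1 - u) * (1 - cnj u))))"
    using nz by (simp add: inverse_eq_divide divide_simps) (simp add: algebra_simps)
  then have "\<exists>q. has_wirtinger_derivs bloch_wigner_dbar
               (- ((u - cnj u) / (4 * \<i> * (u * cnj u) * ((1 - u) * (1 - cnj u))))) q u"
    using has_wirtinger_derivs_cong[OF derivs _ refl] by blast
  then show ?thesis
    by (simp only: of_real_Im_div_norms)
qed

section \<open>Dependence on the vertices\<close>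

definition shape :: "(nat \<Rightarrow> complex) \<Rightarrow> complex" where
  "shape z = (z 3 - z 1) / (z 2 - z 1)"

definition shape_deriv :: "nat \<Rightarrow> (nat \<Rightarrow> complex) \<Rightarrow> complex" where
  "shape_deriv i z =
     (if i = 1 then z 3 - z 2 else if i = 2 then z 1 - z 3 else z 2 - z 1) / (z 2 - z 1)\<^sup>2"

lemma VolF_eq_bloch_wigner_shape: "VolF z = bloch_wigner (shape z)"
  by (simp add: VolF_def Vol_def bloch_wigner_def shape_def Let_def)

lemma Area_eq_coordinates:
  "Area z = (Re (z 2 - z 1) * Im (z 3 - z 1) - Im (z 2 - z 1) * Re (z 3 - z 1)) / 2"
  unfolding Area_def by (simp add: Re_divide algebra_simps) (simp add: field_simps)

lemma Area_nonzero_imp_vertices_distinct: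
  assumes "Area z \<noteq> 0"
  shows "z 2 \<noteq> z 1"
  using assms by (auto simp: Area_eq_coordinates)

lemma Area_pos_imp_vertices_distinct: "Area z > 0 \<Longrightarrow> z 2 \<noteq> z 1"
  by (rule Area_nonzero_imp_vertices_distinct) simp

lemma Im_shape: "Im (shape z) = 2 * Area z / (cmod (z 2 - z 1))\<^sup>2"
proof -
  define a b where "a = z 2 - z 1" and "b = z 3 - z 1"
  have "Im (shape z) = (Re a * Im b - Im a * Re b) / (cmod a)\<^sup>2"
    by (simp add: shape_def a_def b_def Im_divide cmod_power2 algebra_simps)
  moreover have "2 * Area z = Re a * Im b - Im a * Re b"
    by (simp add: Area_eq_coordinates a_def b_def)
  ultimately show ?thesis
    by (simp add: a_def)
qed

lemma Area_pos_imp_Im_shape_pos: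
  assumes "Area z > 0"
  shows "0 < Im (shape z)"
  using assms Area_pos_imp_vertices_distinct[OF assms] by (simp add: Im_shape)

lemma fun_upd_add_eq:
  fixes z :: "'a \<Rightarrow> 'b::ring_1"
  shows "z(i := z i + s) = (\<lambda>k. z k + s * (if k = i then 1 else 0))"
  by (simp add: fun_eq_iff)

lemma has_field_derivative_shape_move_vertex:
  assumes "i \<in> {1, 2, 3}" "z 2 \<noteq> z 1"
  shows "((\<lambda>s. shape (z(i := z i + s))) has_field_derivative shape_deriv i z) (at 0)"
proof -
  have "z 2 - z 1 \<noteq> 0"
    using assms(2) by simp
  with assms(1) show ?thesis
    unfolding shape_def fun_upd_add_eq
    by (auto intro!: derivative_eq_intros simp: shape_deriv_def power2_eq_square field_simps)
qed

lemma shape_deriv_move_vertex_field_differentiable: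
  assumes "z 2 \<noteq> z 1"
  shows "(\<lambda>s. shape_deriv j (z(i := z i + s))) field_differentiable at 0"
  unfolding shape_deriv_def fun_upd_add_eq using assms
  by (cases "j = 1"; cases "j = 2") (auto intro!: derivative_intros)

lemma has_vector_derivative_along_real_multiples:
  assumes "(g has_field_derivative D) (at 0)"
  shows "((\<lambda>t::real. g (of_real t * c)) has_vector_derivative D * c) (at 0)"
proof -
  have "((\<lambda>s. g (s * c)) has_field_derivative D * c) (at 0)"
    using DERIV_chain2[OF _ DERIV_cmult_right[OF DERIV_ident, of c]] assms by simp
  then show ?thesis
    using has_vector_derivative_real_field[of "\<lambda>s. g (s * c)" "D * c" 0] by simp
qed

lemma has_vector_derivative_wirtinger_compose:
  assumes "(g has_field_derivative D) (at 0)" "has_wirtinger_derivs \<phi> p q (g 0)"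
  shows "((\<lambda>t::real. \<phi> (g (of_real t * c))) has_vector_derivative p * (D * c) + q * cnj (D * c)) (at 0)"
proof -
  have "((\<lambda>t::real. g (of_real t * c)) has_derivative (\<lambda>h. h *\<^sub>R (D * c))) (at 0)"
    using has_vector_derivative_along_real_multiples[OF assms(1)]
    by (simp add: has_vector_derivative_def)
  moreover have "(\<phi> has_derivative (\<lambda>h. p * h + q * cnj h)) (at (g (of_real 0 * c)))"
    using assms(2) by (simp add: has_wirtinger_derivs_def)
  ultimately show ?thesis
    unfolding has_vector_derivative_def
    by (rule has_derivative_compose[THEN has_derivative_eq_rhs])
       (auto simp: fun_eq_iff scaleR_conv_of_real algebra_simps)
qed

lemma Wz_Wzbar_of_directional:
  assumes "\<And>c. ((\<lambda>t. F (z(i := z i + of_real t * c))) has_vector_derivative A * c + B * cnj c) (at 0)"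
  shows "Wz i F z = A" "Wzbar i F z = B"
proof -
  have "(\<lambda>k. z k + of_real t * unitdir i c k) = z(i := z i + of_real t * c)" for t c
    by (simp add: unitdir_def fun_eq_iff)
  then have "dirD F (unitdir i c) z = A * c + B * cnj c" for c
    unfolding dirD_def using vector_derivative_at[OF assms] by simp
  from this[of 1] this[of \<i>] show "Wz i F z = A" "Wzbar i F z = B"
    unfolding Wz_def Wzbar_def by (simp_all add: complex_eq_iff)
qed

lemma Wzbar_VolF:
  assumes "Area z > 0" "j \<in> {1, 2, 3}"
  shows "Wzbar j VolF z = bloch_wigner_dbar (shape z) * cnj (shape_deriv j z)"
proof -
  obtain p where "has_wirtinger_derivs bloch_wigner p (bloch_wigner_dbar (shape z)) (shape z)"
    using has_wirtinger_derivs_bloch_wigner[OF Area_pos_imp_Im_shape_pos[OF assms(1)]] ..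
  then have "((\<lambda>t. bloch_wigner (shape (z(j := z j + of_real t * c)))) has_vector_derivative
      p * (shape_deriv j z * c) + bloch_wigner_dbar (shape z) * cnj (shape_deriv j z * c)) (at 0)" for c
    using has_vector_derivative_wirtinger_compose[OF has_field_derivative_shape_move_vertex
            [OF assms(2) Area_pos_imp_vertices_distinct[OF assms(1)]]]
    by simp
  then show ?thesis
    unfolding VolF_eq_bloch_wigner_shape
    by (intro Wz_Wzbar_of_directional(2)) (simp add: algebra_simps)
qed

lemma Wz_Wzbar_VolF:
  assumes "Area z > 0" "i \<in> {1, 2, 3}" "j \<in> {1, 2, 3}"
  shows "Wz i (Wzbar j VolF) z
           = - of_real (Im (shape z) / (2 * (cmod (shape z))\<^sup>2 * (cmod (1 - shape z))\<^sup>2))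
             * shape_deriv i z * cnj (shape_deriv j z)"
proof -
  define \<kappa> :: complex where "\<kappa> = of_real (Im (shape z) / (2 * (cmod (shape z))\<^sup>2 * (cmod (1 - shape z))\<^sup>2))"
  have distinct: "z 2 \<noteq> z 1"
    by (rule Area_pos_imp_vertices_distinct[OF assms(1)])
  obtain q where q: "has_wirtinger_derivs bloch_wigner_dbar (- \<kappa>) q (shape z)"
    using has_wirtinger_derivs_bloch_wigner_dbar[OF Area_pos_imp_Im_shape_pos[OF assms(1)]]
    unfolding \<kappa>_def ..
  have dbar: "((\<lambda>t. bloch_wigner_dbar (shape (z(i := z i + of_real t * c)))) has_vector_derivative
      - \<kappa> * (shape_deriv i z * c) + q * cnj (shape_deriv i z * c)) (at 0)" for c
    by (rule has_vector_derivative_wirtinger_compose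
          [OF has_field_derivative_shape_move_vertex[OF assms(2) distinct]]) (simp add: q)
  obtain D where D: "((\<lambda>s. shape_deriv j (z(i := z i + s))) has_field_derivative D) (at 0)"
    using shape_deriv_move_vertex_field_differentiable[OF distinct]
    by (auto simp: field_differentiable_def)
  have "((\<lambda>t. Wzbar j VolF (z(i := z i + of_real t * c))) has_vector_derivative
      (- \<kappa> * shape_deriv i z * cnj (shape_deriv j z)) * c
      + (q * cnj (shape_deriv i z) * cnj (shape_deriv j z) + bloch_wigner_dbar (shape z) * cnj D) * cnj c)
      (at 0)" for c
  proof (rule has_vector_derivative_transform_within_open)
    show "open {t::real. 0 < Area (z(i := z i + of_real t * c))}"
      unfolding fun_upd_add_eq Area_def
      by (intro open_Collect_less continuous_intros) simp
    show "0 \<in> {t::real. 0 < Area (z(i := z i + of_real t * c))}"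
      using assms(1) by simp
    show "bloch_wigner_dbar (shape (z(i := z i + of_real t * c))) * cnj (shape_deriv j (z(i := z i + of_real t * c)))
        = Wzbar j VolF (z(i := z i + of_real t * c))"
      if "t \<in> {t. 0 < Area (z(i := z i + of_real t * c))}" for t
      using Wzbar_VolF[OF _ assms(3)] that by simp
    show "((\<lambda>t. bloch_wigner_dbar (shape (z(i := z i + of_real t * c)))
          * cnj (shape_deriv j (z(i := z i + of_real t * c)))) has_vector_derivative
        (- \<kappa> * shape_deriv i z * cnj (shape_deriv j z)) * c
        + (q * cnj (shape_deriv i z) * cnj (shape_deriv j z) + bloch_wigner_dbar (shape z) * cnj D) * cnj c)
        (at 0)"
      using has_vector_derivative_mult[OF dbar[of c] bounded_linear.has_vector_derivative
              [OF bounded_linear_cnj has_vector_derivative_along_real_multiples[OF D, of c]]]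
      by (simp add: algebra_simps)
  qed
  then show ?thesis
    unfolding \<kappa>_def by (rule Wz_Wzbar_of_directional(1))
qed

section \<open>The circumradius\<close>

lemma equidistant_radius_sq:
  fixes a1 a2 b1 b2 x y r :: real
  assumes "x\<^sup>2 + y\<^sup>2 = r\<^sup>2" "(a1 - x)\<^sup>2 + (a2 - y)\<^sup>2 = r\<^sup>2" "(b1 - x)\<^sup>2 + (b2 - y)\<^sup>2 = r\<^sup>2"
  shows "r\<^sup>2 * (4 * (a1 * b2 - a2 * b1)\<^sup>2) = (a1\<^sup>2 + a2\<^sup>2) * (b1\<^sup>2 + b2\<^sup>2) * ((b1 - a1)\<^sup>2 + (b2 - a2)\<^sup>2)"
  using assms by algebra

lemma equidistant_point_exists:
  fixes a1 a2 b1 b2 :: real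
  assumes "a1 * b2 - a2 * b1 \<noteq> 0"
  shows "\<exists>x y. (a1 - x)\<^sup>2 + (a2 - y)\<^sup>2 = x\<^sup>2 + y\<^sup>2 \<and> (b1 - x)\<^sup>2 + (b2 - y)\<^sup>2 = x\<^sup>2 + y\<^sup>2"
proof -
  define d where "d = a1 * b2 - a2 * b1"
  define x where "x = ((a1\<^sup>2 + a2\<^sup>2) * b2 - (b1\<^sup>2 + b2\<^sup>2) * a2) / (2 * d)"
  define y where "y = ((b1\<^sup>2 + b2\<^sup>2) * a1 - (a1\<^sup>2 + a2\<^sup>2) * b1) / (2 * d)"
  have d: "d \<noteq> 0"
    using assms by (simp add: d_def)
  have "2 * d * x = (a1\<^sup>2 + a2\<^sup>2) * b2 - (b1\<^sup>2 + b2\<^sup>2) * a2"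
    and "2 * d * y = (b1\<^sup>2 + b2\<^sup>2) * a1 - (a1\<^sup>2 + a2\<^sup>2) * b1"
    using d by (simp_all add: x_def y_def)
  then have "d * (2 * (a1 * x + a2 * y)) = d * (a1\<^sup>2 + a2\<^sup>2)"
    and "d * (2 * (b1 * x + b2 * y)) = d * (b1\<^sup>2 + b2\<^sup>2)"
    unfolding d_def by algebra+
  then have "2 * (a1 * x + a2 * y) = a1\<^sup>2 + a2\<^sup>2" "2 * (b1 * x + b2 * y) = b1\<^sup>2 + b2\<^sup>2"
    using d by simp_all
  then have "(a1 - x)\<^sup>2 + (a2 - y)\<^sup>2 = x\<^sup>2 + y\<^sup>2 \<and> (b1 - x)\<^sup>2 + (b2 - y)\<^sup>2 = x\<^sup>2 + y\<^sup>2"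
    by (simp add: algebra_simps power2_eq_square)
  then show ?thesis by blast
qed

lemma equidistant_radius_sq_vertices:
  assumes "cmod (z 1 - c) = r" "cmod (z 2 - c) = r" "cmod (z 3 - c) = r"
  shows "r\<^sup>2 * (16 * (Area z)\<^sup>2)
           = (cmod (z 2 - z 1))\<^sup>2 * (cmod (z 3 - z 1))\<^sup>2 * (cmod (z 3 - z 2))\<^sup>2"
proof -
  define a b w where "a = z 2 - z 1" and "b = z 3 - z 1" and "w = c - z 1"
  have "z 1 - c = - w" "z 2 - c = a - w" "z 3 - c = b - w" "z 3 - z 2 = b - a"
    by (simp_all add: a_def b_def w_def)
  then have "(cmod (z 1 - c))\<^sup>2 = (Re w)\<^sup>2 + (Im w)\<^sup>2"
    "(cmod (z 2 - c))\<^sup>2 = (Re a - Re w)\<^sup>2 + (Im a - Im w)\<^sup>2"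
    "(cmod (z 3 - c))\<^sup>2 = (Re b - Re w)\<^sup>2 + (Im b - Im w)\<^sup>2"
    "(cmod (z 3 - z 2))\<^sup>2 = (Re b - Re a)\<^sup>2 + (Im b - Im a)\<^sup>2"
    by (simp_all only: cmod_power2 minus_complex.sel uminus_complex.sel power2_minus)
  note radius = equidistant_radius_sq[OF this(1-3)[unfolded assms, symmetric]] and side = this(4)
  have "16 * (Area z)\<^sup>2 = 4 * (Re a * Im b - Im a * Re b)\<^sup>2"
    by (simp add: Area_eq_coordinates a_def b_def power_divide)
  moreover have "(cmod (z 2 - z 1))\<^sup>2 = (Re a)\<^sup>2 + (Im a)\<^sup>2" "(cmod (z 3 - z 1))\<^sup>2 = (Re b)\<^sup>2 + (Im b)\<^sup>2"
    by (simp_all add: a_def b_def cmod_power2)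
  ultimately show ?thesis
    using radius side by (simp only:)
qed

lemma equidistant_point_vertices_exists:
  assumes "Area z \<noteq> 0"
  shows "\<exists>c r. cmod (z 1 - c) = r \<and> cmod (z 2 - c) = r \<and> cmod (z 3 - c) = r"
proof -
  define a b where "a = z 2 - z 1" and "b = z 3 - z 1"
  have "Re a * Im b - Im a * Re b \<noteq> 0"
    using assms by (simp add: Area_eq_coordinates a_def b_def)
  then obtain x y where xy: "(Re a - x)\<^sup>2 + (Im a - y)\<^sup>2 = x\<^sup>2 + y\<^sup>2" "(Re b - x)\<^sup>2 + (Im b - y)\<^sup>2 = x\<^sup>2 + y\<^sup>2"
    using equidistant_point_exists by blast
  define c where "c = z 1 + Complex x y"
  have "z 2 - c = a - Complex x y" "z 3 - c = b - Complex x y" "z 1 - c = - Complex x y"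
    by (simp_all add: a_def b_def c_def)
  then have "(cmod (z 2 - c))\<^sup>2 = (cmod (z 1 - c))\<^sup>2" "(cmod (z 3 - c))\<^sup>2 = (cmod (z 1 - c))\<^sup>2"
    using xy by (simp_all add: cmod_power2)
  then have "cmod (z 2 - c) = cmod (z 1 - c)" "cmod (z 3 - c) = cmod (z 1 - c)"
    by (simp_all add: power2_eq_iff_nonneg)
  then show ?thesis by metis
qed

lemma circumradius_sq:
  assumes "Area z \<noteq> 0"
  shows "(circumradius z)\<^sup>2 * (16 * (Area z)\<^sup>2)
           = (cmod (z 2 - z 1))\<^sup>2 * (cmod (z 3 - z 1))\<^sup>2 * (cmod (z 3 - z 2))\<^sup>2"
proof -
  obtain c r where c: "cmod (z 1 - c) = r" "cmod (z 2 - c) = r" "cmod (z 3 - c) = r"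
    using equidistant_point_vertices_exists[OF assms] by blast
  have "circumradius z = r"
    unfolding circumradius_def
  proof (rule the_equality)
    show "\<exists>c. cmod (z 1 - c) = r \<and> cmod (z 2 - c) = r \<and> cmod (z 3 - c) = r"
      using c by blast
  next
    fix r' assume "\<exists>c. cmod (z 1 - c) = r' \<and> cmod (z 2 - c) = r' \<and> cmod (z 3 - c) = r'"
    then obtain c' where c': "cmod (z 1 - c') = r'" "cmod (z 2 - c') = r'" "cmod (z 3 - c') = r'"
      by blast
    have "r'\<^sup>2 = r\<^sup>2"
      using equidistant_radius_sq_vertices[OF c] equidistant_radius_sq_vertices[OF c'] assms
      by (metis mult_cancel_right mult_eq_0_iff power_not_zero zero_neq_numeral)
    moreover have "0 \<le> r" "0 \<le> r'"
      using c(1) c'(1) by auto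
    ultimately show "r' = r"
      by (simp add: power2_eq_iff_nonneg)
  qed
  then show ?thesis
    using equidistant_radius_sq_vertices[OF c] by simp
qed

section \<open>The Hessian of the volume\<close>

lemma Im_shape_div_norms_eq:
  assumes "Area z > 0"
  shows "Im (shape z) / (2 * (cmod (shape z))\<^sup>2 * (cmod (1 - shape z))\<^sup>2)
           = (cmod (z 2 - z 1)) ^ 4 / (16 * Area z * (circumradius z)\<^sup>2)"
proof -
  define \<alpha> \<beta> \<gamma> where "\<alpha> = cmod (z 2 - z 1)" and "\<beta> = cmod (z 3 - z 1)" and "\<gamma> = cmod (z 3 - z 2)"
  have a: "z 2 - z 1 \<noteq> 0"
    using Area_pos_imp_vertices_distinct[OF assms] by simp
  have nz: "\<alpha> \<noteq> 0" "\<beta> \<noteq> 0" "\<gamma> \<noteq> 0"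
    using Area_pos_imp_Im_shape_pos[OF assms] a by (auto simp: \<alpha>_def \<beta>_def \<gamma>_def shape_def)
  have "1 - shape z = (z 2 - z 3) / (z 2 - z 1)"
    using a by (simp add: shape_def field_simps)
  then have cmod_one_minus: "cmod (1 - shape z) = \<gamma> / \<alpha>"
    by (simp add: \<alpha>_def \<gamma>_def norm_divide norm_minus_commute)
  have cmod_shape: "cmod (shape z) = \<beta> / \<alpha>"
    by (simp add: shape_def \<alpha>_def \<beta>_def norm_divide)
  have Im: "Im (shape z) = 2 * Area z / \<alpha>\<^sup>2"
    by (simp add: Im_shape \<alpha>_def)
  have R: "(circumradius z)\<^sup>2 = \<alpha>\<^sup>2 * \<beta>\<^sup>2 * \<gamma>\<^sup>2 / (16 * (Area z)\<^sup>2)"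
    using circumradius_sq[of z] assms unfolding \<alpha>_def \<beta>_def \<gamma>_def by (simp add: field_simps)
  show ?thesis
    unfolding \<alpha>_def[symmetric] cmod_one_minus cmod_shape Im R
    using assms nz by (simp add: field_simps power2_eq_square power4_eq_xxxx)
qed

lemma Dmat_eq:
  assumes "Area z > 0" "i \<in> {1..3}" "j \<in> {1..3}"
  shows "Dmat z i j = of_real ((cmod (z 2 - z 1)) ^ 4 / (16 * Area z * (circumradius z)\<^sup>2))
                      * shape_deriv i z * cnj (shape_deriv j z)"
proof -
  have "i \<in> {1, 2, 3}" "j \<in> {1, 2, 3}"
    using assms(2,3) by auto
  then show ?thesis
    using Wz_Wzbar_VolF[OF assms(1)] by (simp add: Dmat_def Im_shape_div_norms_eq[OF assms(1)])
qed

lemma sum_shape_deriv_eq_nablabar: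
  assumes "Area z \<noteq> 0"
  shows "(\<Sum>i\<in>{1..3}. \<Phi> i * shape_deriv i z) = - 4 * \<i> * Area z * nablabar z \<Phi> / (z 2 - z 1)\<^sup>2"
proof -
  have "{1..3::nat} = {1, 2, 3}" by auto
  then show ?thesis
    using assms Area_nonzero_imp_vertices_distinct[OF assms]
    by (simp add: shape_deriv_def nablabar_def field_simps)
qed

lemma sum_cnj_shape_deriv_eq_nabla:
  assumes "Area z \<noteq> 0"
  shows "(\<Sum>j\<in>{1..3}. \<Psi> j * cnj (shape_deriv j z)) = 4 * \<i> * Area z * nabla z \<Psi> / (cnj (z 2 - z 1))\<^sup>2"
proof -
  have "{1..3::nat} = {1, 2, 3}" by auto
  then show ?thesis
    using assms Area_nonzero_imp_vertices_distinct[OF assms]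
    by (simp add: shape_deriv_def nabla_def field_simps)
qed

theorem proposition2:
  fixes z \<Phi> \<Psi> :: "nat \<Rightarrow> complex"
  assumes "Area z > 0"
  shows "(\<Sum>i\<in>{1..3::nat}. \<Sum>j\<in>{1..3::nat}. \<Phi> i * Dmat z i j * cnj (\<Psi> j))
       = complex_of_real (Area z / (circumradius z)\<^sup>2)
         * nablabar z \<Phi> * nabla z (\<lambda>v. cnj (\<Psi> v))"
proof -
  have Area_nonzero: "Area z \<noteq> 0"
    using assms by simp
  define a where "a = z 2 - z 1"
  define \<kappa> where "\<kappa> = complex_of_real ((cmod a) ^ 4 / (16 * Area z * (circumradius z)\<^sup>2))"
  have "(\<Sum>i\<in>{1..3::nat}. \<Sum>j\<in>{1..3::nat}. \<Phi> i * Dmat z i j * cnj (\<Psi> j))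
      = \<kappa> * ((\<Sum>i\<in>{1..3}. \<Phi> i * shape_deriv i z) * (\<Sum>j\<in>{1..3}. cnj (\<Psi> j) * cnj (shape_deriv j z)))"
    unfolding sum_product unfolding sum_distrib_left
    by (intro sum.cong refl) (simp add: Dmat_eq assms \<kappa>_def a_def mult_ac)
  also have "\<dots> = \<kappa> * ((- 4 * \<i> * Area z * nablabar z \<Phi> / a\<^sup>2)
                    * (4 * \<i> * Area z * nabla z (\<lambda>v. cnj (\<Psi> v)) / (cnj a)\<^sup>2))"
    unfolding a_def sum_shape_deriv_eq_nablabar[OF Area_nonzero] sum_cnj_shape_deriv_eq_nabla[OF Area_nonzero] ..
  also have "\<dots> = complex_of_real (Area z / (circumradius z)\<^sup>2)
                    * nablabar z \<Phi> * nabla z (\<lambda>v. cnj (\<Psi> v))"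
  proof -
    have "a\<^sup>2 * (cnj a)\<^sup>2 = (complex_of_real ((cmod a)\<^sup>2))\<^sup>2"
      unfolding complex_norm_square by (simp add: power_mult_distrib)
    then have "a\<^sup>2 * (cnj a)\<^sup>2 = complex_of_real ((cmod a) ^ 4)"
      by simp
    moreover have "a \<noteq> 0"
      using Area_pos_imp_vertices_distinct[OF assms] by (simp add: a_def)
    ultimately show ?thesis
      using assms by (simp add: \<kappa>_def field_simps power2_eq_square)
  qed
  finally show ?thesis .
qed

end
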